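(* Let $n,d,c\in\mathbb{N}$ with $d\ge 50$ and $1\le c\le d$, and let $\mathcal{F}\subseteq 2^{[n]}$ be a hereditary family with $\delta(\mathcal{F})\ge 2^{d-1}-c+1$. If $P\subseteq[n]$ is an isolated pile of $\mathcal{F}$, then $\sum_{x\in P}\omega_{\mathcal{F}}(x)\ge \mathfrak{B}_c\, d$.
   Context: A family $\mathcal{F}\subseteq 2^{[n]}$ is hereditary if $F'\subseteq F\in\mathcal{F}$ implies $F'\in\mathcal{F}$. $d_{\mathcal{F}}(x)=|\{F\in\mathcal{F}:x\in F\}|$, $\delta(\mathcal{F})=\min_x d_{\mathcal{F}}(x)$, $N(x)=\bigcup_{x\in F\in\mathcal{F}}F$. The weight of $x$ is $\omega_{\mathcal{F}}(x)=\sum_{x\in F\in\mathcal{F}}\frac{1}{|F|}$. For $1\le c\le d$, $\mathfrak{B}_c=\frac{2^d-c}{d}$ if $1\le c\le d-1$ and $\mathfrak{B}_d=\frac{2^d-d-\frac12}{d}$. A set $P\subseteq[n]$ with $|P|=d$ is a pile of $\mathcal{F}$ if $P\subseteq N(y)$ for every $y\in P$, and there exists $z\in P$ with $N(z)=P$. A pile is isolated if it is disjoint from every other pile of $\mathcal{F}$. *)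

theory Defs
  imports Complex_Main
begin

definition hereditary :: "nat set set \<Rightarrow> bool" where
  "hereditary \<F> \<longleftrightarrow> (\<forall>F\<in>\<F>. \<forall>F'. F' \<subseteq> F \<longrightarrow> F' \<in> \<F>)"

definition deg :: "nat set set \<Rightarrow> nat \<Rightarrow> nat" where
  "deg \<F> x = card {F\<in>\<F>. x \<in> F}"

definition min_deg :: "nat \<Rightarrow> nat set set \<Rightarrow> nat" where
  "min_deg n \<F> = Min (deg \<F> ` {1..n})"

definition nbhd :: "nat set set \<Rightarrow> nat \<Rightarrow> nat set" where
  "nbhd \<F> x = \<Union>{F\<in>\<F>. x \<in> F}"

definition weight :: "nat set set \<Rightarrow> nat \<Rightarrow> real" where
  "weight \<F> x = (\<Sum>F\<in>{F\<in>\<F>. x \<in> F}. 1 / real (card F))"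

definition frakB :: "nat \<Rightarrow> nat \<Rightarrow> real" where
  "frakB d c = (if 1 \<le> c \<and> c \<le> d - 1 then (2 ^ d - real c) / real d
                else (2 ^ d - real d - 1/2) / real d)"

definition is_pile :: "nat \<Rightarrow> nat \<Rightarrow> nat set set \<Rightarrow> nat set \<Rightarrow> bool" where
  "is_pile n d \<F> P \<longleftrightarrow> P \<subseteq> {1..n} \<and> card P = d \<and>
     (\<forall>y\<in>P. P \<subseteq> nbhd \<F> y) \<and> (\<exists>z\<in>P. nbhd \<F> z = P)"

definition isolated_pile :: "nat \<Rightarrow> nat \<Rightarrow> nat set set \<Rightarrow> nat set \<Rightarrow> bool" where
  "isolated_pile n d \<F> P \<longleftrightarrow> is_pile n d \<F> P \<and>
     (\<forall>Q. is_pile n d \<F> Q \<and> Q \<noteq> P \<longrightarrow> P \<inter> Q = {})"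

end

theory Submission
  imports Defs
begin

text \<open>
  Let \<open>z\<close> be the point with \<open>N(z) = P\<close> and let \<open>M\<close> be the family of subsets of \<open>P\<close>
  missing from \<open>\<F>\<close>; by heredity \<open>M\<close> is closed upwards inside \<open>P\<close>. Every nonempty member
  of \<open>\<F>\<close> inside \<open>P\<close> contributes exactly \<open>1\<close> to the weight of \<open>P\<close>, so this weight is
  \<open>2^d - |M| - 1\<close> plus the outer weight, coming from sets that leave \<open>P\<close>. The degree bound
  says that each \<open>x \<in> P\<close> lies in at most \<open>outdeg x + c - 1\<close> sets of \<open>M\<close>; at \<open>z\<close> this gives
  \<open>|M| \<le> 2(c - 1)\<close>, and it remains to show that the outer weight is at least the excess
  \<open>e = |M| + 1 - c\<close> (up to \<open>1/2\<close> when \<open>c = d\<close>). A point avoiding \<open>\<delta>(x)\<close> sets of \<open>M\<close> has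
  at least \<open>e - \<delta>(x)\<close> outer sets, and by heredity \<open>m\<close> outer sets through \<open>x\<close> carry weight at
  least \<open>min m 2^k / (k + 2)\<close>. For small \<open>e\<close> the points with \<open>\<delta>(x) \<ge> e\<close> are few, since they
  force many sets of codimension \<open>1\<close> and \<open>2\<close> into \<open>M\<close>, and every other point has outer weight
  at least \<open>1/2\<close>; for large \<open>e\<close> one averages over \<open>P\<close> with \<open>2^k \<approx> 2d\<close>.
\<close>

lemma card_subsets_containing:
  assumes "finite P" "x \<in> P"
  shows "card {S. S \<subseteq> P \<and> x \<in> S} = 2 ^ (card P - 1)"
proof -
  have "{S. S \<subseteq> P \<and> x \<in> S} = insert x ` Pow (P - {x})"
  proof (intro equalityI subsetI)
    fix S assume "S \<in> {S. S \<subseteq> P \<and> x \<in> S}"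
    then have "S = insert x (S - {x})" "S - {x} \<in> Pow (P - {x})" by auto
    then show "S \<in> insert x ` Pow (P - {x})" by blast
  qed (use assms in auto)
  moreover have "inj_on (insert x) (Pow (P - {x}))"
    by (rule inj_onI) (metis Diff_insert_absorb PowD subset_Diff_insert)
  ultimately show ?thesis
    using assms by (simp add: card_image card_Pow)
qed

lemma card_supersets_within:
  assumes "finite P" "S \<subseteq> P"
  shows "card {T. S \<subseteq> T \<and> T \<subseteq> P} = 2 ^ card (P - S)"
proof -
  have "{T. S \<subseteq> T \<and> T \<subseteq> P} = (\<union>) S ` Pow (P - S)"
  proof (intro equalityI subsetI)
    fix T assume "T \<in> {T. S \<subseteq> T \<and> T \<subseteq> P}"
    then have "T = S \<union> (T - S)" "T - S \<in> Pow (P - S)" by auto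
    then show "T \<in> (\<union>) S ` Pow (P - S)" by blast
  qed (use assms in auto)
  moreover have "inj_on ((\<union>) S) (Pow (P - S))"
    by (rule inj_onI) auto
  ultimately show ?thesis
    using assms by (simp add: card_image card_Pow)
qed

lemma sum_card_avoiding:
  assumes "finite P" "finite L"
  shows "(\<Sum>x\<in>P. card {S\<in>L. x \<notin> S}) = (\<Sum>S\<in>L. card (P - S))"
proof -
  have "(\<Sum>x\<in>P. card {S\<in>L. x \<notin> S}) = (\<Sum>x\<in>P. \<Sum>S\<in>{S. S \<in> L \<and> x \<notin> S}. 1)"
    by simp
  also have "\<dots> = (\<Sum>S\<in>L. \<Sum>x\<in>{x. x \<in> P \<and> x \<notin> S}. 1)"
    by (rule sum.swap_restrict[OF assms])
  also have "\<dots> = (\<Sum>S\<in>L. card (P - S))"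
    by (simp add: set_diff_eq)
  finally show ?thesis .
qed

lemma card_div_le_sum_inverse_card:
  assumes "finite \<O>" "\<G> \<subseteq> \<O>" and "\<And>H. H \<in> \<G> \<Longrightarrow> H \<noteq> {} \<and> finite H \<and> card H \<le> m"
  shows "real (card \<G>) / real m \<le> (\<Sum>H\<in>\<O>. 1 / real (card H))"
proof -
  have "real (card \<G>) / real m = (\<Sum>H\<in>\<G>. 1 / real m)"
    by simp
  also have "\<dots> \<le> (\<Sum>H\<in>\<G>. 1 / real (card H))"
    using assms(3) by (intro sum_mono frac_le) (auto simp: card_gt_0_iff)
  also have "\<dots> \<le> (\<Sum>H\<in>\<O>. 1 / real (card H))"
    by (rule sum_mono2[OF assms(1,2)]) simp
  finally show ?thesis .
qed

lemma seven_mult_le_pow2: "j \<ge> 6 \<Longrightarrow> 7 * (j + 2) \<le> 2 ^ j + (4::nat)"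
proof (induction j rule: dec_induct)
  case (step j)
  have "(2::nat) ^ 6 \<le> 2 ^ j"
    using step.hyps(1) by (rule power_increasing) simp
  then have "7 \<le> (2::nat) ^ j" by simp
  then show ?case using step.IH by simp
qed simp

lemma small_exponent_with_pow_ge_double:
  assumes "d \<ge> (50::nat)"
  obtains k where "2 * d \<le> 2 ^ k" "7 * k \<le> d + 4"
proof -
  define k where "k = (LEAST k. 2 * d \<le> 2 ^ k)"
  have "2 * d \<le> 2 ^ (2 * d)" by (metis less_exp less_imp_le)
  then have k: "2 * d \<le> 2 ^ k"
    unfolding k_def by (rule LeastI)
  then have "k \<ge> 1" using assms by (cases k) auto
  then have "\<not> 2 * d \<le> 2 ^ (k - 1)"
    unfolding k_def by (intro not_less_Least) (simp add: k_def)
  have "7 * k \<le> d + 4"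
  proof (cases "k \<le> 7")
    case False
    define j where "j = k - 2"
    have "k = j + 2" "j \<ge> 6" using False by (simp_all add: j_def)
    then show ?thesis
      using seven_mult_le_pow2[of j] \<open>\<not> 2 * d \<le> 2 ^ (k - 1)\<close> by simp
  qed (use assms in simp)
  with k show thesis by (rule that)
qed

lemma large_excess_arith:
  fixes d e k m :: real
  assumes "7 * k \<le> d + 4" "d + 3 \<le> 5 * e" "m + 1 \<le> e + d" "1 \<le> k" "0 \<le> e"
  shows "e * (k + 2) + m * (k - 1) \<le> d * e"
proof -
  have "6 * (k - 1) \<le> d - k - 2"
    using assms(1) by (simp add: algebra_simps)
  then have "e * (6 * (k - 1)) \<le> e * (d - k - 2)"
    using assms(5) by (rule mult_left_mono)
  moreover have "m * (k - 1) \<le> (e + d - 1) * (k - 1)"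
    by (rule mult_right_mono) (use assms in linarith)+
  moreover have "(d - 1) * (k - 1) \<le> (5 * e) * (k - 1)"
    by (rule mult_right_mono) (use assms in linarith)+
  ultimately show ?thesis
    by (simp add: algebra_simps)
qed

section \<open>Upward closed families\<close>

locale upset =
  fixes P :: "'a set" and M :: "'a set set"
  assumes finite_ground: "finite P"
    and upset_subset: "M \<subseteq> Pow P"
    and upset_closed: "S \<in> M \<Longrightarrow> S \<subseteq> T \<Longrightarrow> T \<subseteq> P \<Longrightarrow> T \<in> M"
begin

lemma finite_upset: "finite M"
  using finite_ground upset_subset by (meson finite_Pow_iff finite_subset)

lemma upset_memD: "S \<in> M \<Longrightarrow> S \<subseteq> P"
  using upset_subset by blast

definition avoid_count :: "'a \<Rightarrow> nat" where
  "avoid_count x = card {S\<in>M. x \<notin> S}"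

definition layer :: "nat \<Rightarrow> 'a set set" where
  "layer j = {S\<in>M. card (P - S) = j}"

lemma card_containing_add_avoid_count: "card {S\<in>M. x \<in> S} + avoid_count x = card M"
proof -
  have "{S\<in>M. x \<in> S} = M \<inter> {S. x \<in> S}" "{S\<in>M. x \<notin> S} = M - {S. x \<in> S}"
    by auto
  then show ?thesis
    using card_Int_Diff[OF finite_upset] unfolding avoid_count_def by simp
qed

lemma avoid_count_le_card_containing:
  assumes "x \<in> P"
  shows "avoid_count x \<le> card {S\<in>M. x \<in> S}"
  unfolding avoid_count_def
proof (rule card_inj_on_le)
  show "inj_on (insert x) {S\<in>M. x \<notin> S}"
    by (rule inj_onI) (metis (no_types, lifting) Diff_insert_absorb mem_Collect_eq)
  show "insert x ` {S\<in>M. x \<notin> S} \<subseteq> {S\<in>M. x \<in> S}"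
    using assms by (auto intro: upset_closed dest: upset_memD)
qed (use finite_upset in simp)

lemma card_upset_le_double_containing:
  "x \<in> P \<Longrightarrow> card M \<le> 2 * card {S\<in>M. x \<in> S}"
  using card_containing_add_avoid_count[of x] avoid_count_le_card_containing[of x] by linarith

lemma ground_mem_upset: "M \<noteq> {} \<Longrightarrow> P \<in> M"
  using upset_closed upset_memD by blast

lemma deletion_mem_upset: "S \<in> M \<Longrightarrow> x \<in> P \<Longrightarrow> x \<notin> S \<Longrightarrow> P - {x} \<in> M"
  by (auto intro: upset_closed dest: upset_memD)

lemma two_pow_card_complement_le: "S \<in> M \<Longrightarrow> 2 ^ card (P - S) \<le> card M"
  using card_supersets_within[OF finite_ground upset_memD, of S]
    card_mono[OF finite_upset, of "{T. S \<subseteq> T \<and> T \<subseteq> P}"] upset_closed by auto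

lemma layer_0: "M \<noteq> {} \<Longrightarrow> layer 0 = {P}"
  using ground_mem_upset finite_ground by (auto simp: layer_def dest: upset_memD)

lemma card_avoided_le_layer_1: "card {x\<in>P. 1 \<le> avoid_count x} \<le> card (layer 1)"
proof (rule card_inj_on_le)
  show "inj_on (\<lambda>x. P - {x}) {x\<in>P. 1 \<le> avoid_count x}"
    by (rule inj_onI) blast
  show "(\<lambda>x. P - {x}) ` {x\<in>P. 1 \<le> avoid_count x} \<subseteq> layer 1"
  proof clarify
    fix x assume "x \<in> P" "1 \<le> avoid_count x"
    then obtain S where "S \<in> M" "x \<notin> S"
      unfolding avoid_count_def by (metis (mono_tags, lifting) Collect_empty_eq card.empty not_one_le_zero)
    then show "P - {x} \<in> layer 1"
      using deletion_mem_upset \<open>x \<in> P\<close> by (simp add: layer_def Diff_Diff_Int)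
  qed
qed (simp add: layer_def finite_upset)

lemma sum_card_layers_le: "finite J \<Longrightarrow> (\<Sum>j\<in>J. card (layer j)) \<le> card M"
proof -
  assume "finite J"
  then have "(\<Sum>j\<in>J. card (layer j)) = card (\<Union>j\<in>J. layer j)"
    by (intro card_UN_disjoint[symmetric]) (auto simp: layer_def finite_upset)
  also have "\<dots> \<le> card M"
    by (rule card_mono[OF finite_upset]) (auto simp: layer_def)
  finally show ?thesis .
qed

lemma sum_avoid_count: "(\<Sum>x\<in>P. avoid_count x) = (\<Sum>S\<in>M. card (P - S))"
  unfolding avoid_count_def by (rule sum_card_avoiding[OF finite_ground finite_upset])

lemma sum_card_avoiding_layer: "(\<Sum>x\<in>P. card {S\<in>layer j. x \<notin> S}) = j * card (layer j)"
  using sum_card_avoiding[OF finite_ground, of "layer j"] finite_upset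
  by (simp add: layer_def)

lemma avoid_count_le_pow_layer_2:
  assumes "x \<in> P"
  shows "avoid_count x \<le> 2 ^ card {S\<in>layer 2. x \<notin> S}"
proof -
  define W where "W = {w\<in>P. w \<noteq> x \<and> P - {x, w} \<in> M}"
  have "avoid_count x \<le> card (Pow W)"
    unfolding avoid_count_def
  proof (rule card_inj_on_le)
    show "inj_on (\<lambda>S. P - S - {x}) {S\<in>M. x \<notin> S}"
      by (rule inj_onI) (use upset_memD in blast)
    show "(\<lambda>S. P - S - {x}) ` {S\<in>M. x \<notin> S} \<subseteq> Pow W"
      unfolding W_def by (auto intro: upset_closed dest: upset_memD)
  qed (simp add: W_def finite_ground)
  also have "\<dots> = 2 ^ card W"
    by (simp add: W_def card_Pow finite_ground)
  also have "card W \<le> card {S\<in>layer 2. x \<notin> S}"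
  proof (rule card_inj_on_le)
    show "inj_on (\<lambda>w. P - {x, w}) W"
      by (rule inj_onI) (auto simp: W_def)
    show "(\<lambda>w. P - {x, w}) ` W \<subseteq> {S\<in>layer 2. x \<notin> S}"
      using assms by (auto simp: W_def layer_def Diff_Diff_Int)
  qed (simp add: layer_def finite_upset)
  then have "2 ^ card W \<le> (2::nat) ^ card {S\<in>layer 2. x \<notin> S}"
    by (rule power_increasing) simp
  finally show ?thesis .
qed

end

section \<open>The missing sets of a pile\<close>

text \<open>
  \<open>M\<close> stands for the subsets of the pile missing from the family, \<open>outdeg x\<close> and
  \<open>outweight x\<close> for the degree and weight of \<open>x\<close> counted only over sets not contained in
  the pile.
\<close>

locale missing_upset = upset P M for P :: "'a set" and M +
  fixes d c :: nat and z :: 'a and outdeg :: "'a \<Rightarrow> nat" and outweight :: "'a \<Rightarrow> real"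
  assumes card_ground: "card P = d"
    and d_ge_50: "d \<ge> 50" and c_ge_1: "1 \<le> c" and c_le_d: "c \<le> d"
    and z_in_ground: "z \<in> P" and outdeg_z: "outdeg z = 0"
    and card_containing_le: "x \<in> P \<Longrightarrow> card {S\<in>M. x \<in> S} \<le> outdeg x + (c - 1)"
    and outweight_ge: "x \<in> P \<Longrightarrow> real (min (outdeg x) (2 ^ k)) / real (k + 2) \<le> outweight x"
begin

definition excess :: nat where
  "excess = card M + 1 - c"

definition heavy :: "'a set" where
  "heavy = {x\<in>P. excess \<le> avoid_count x}"

lemma card_upset_le: "card M \<le> 2 * (c - 1)"
  using card_upset_le_double_containing[OF z_in_ground] card_containing_le[OF z_in_ground]
  by (simp add: outdeg_z)

lemma card_upset_less_two_pow: "card M < 2 ^ d"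
proof -
  have "d - 1 < 2 ^ (d - 1)"
    by (rule less_exp)
  moreover have "(2::nat) ^ d = 2 * 2 ^ (d - 1)"
    using d_ge_50 by (cases d) simp_all
  ultimately show ?thesis
    using card_upset_le c_le_d by linarith
qed

lemma outweight_nonneg: "x \<in> P \<Longrightarrow> 0 \<le> outweight x"
  using outweight_ge[of x 0] by (smt (verit) divide_nonneg_nonneg of_nat_0_le_iff)

lemma excess_le_outdeg_add_avoid_count: "x \<in> P \<Longrightarrow> excess \<le> outdeg x + avoid_count x"
  using card_containing_le[of x] card_containing_add_avoid_count[of x] c_ge_1
  unfolding excess_def by linarith

lemma half_le_outweight: "x \<in> P \<Longrightarrow> avoid_count x < excess \<Longrightarrow> 1 / 2 \<le> outweight x"
  using excess_le_outdeg_add_avoid_count[of x] outweight_ge[of x 0] by simp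

lemma half_card_light_le_sum_outweight: "(real d - real (card heavy)) / 2 \<le> (\<Sum>x\<in>P. outweight x)"
proof -
  have heavy_sub: "heavy \<subseteq> P" by (auto simp: heavy_def)
  moreover have "card heavy \<le> d"
    using card_mono[OF finite_ground heavy_sub] card_ground by simp
  ultimately have "(real d - real (card heavy)) / 2 = (\<Sum>x\<in>P - heavy. 1 / 2)"
    using card_ground finite_ground by (simp add: card_Diff_subset finite_subset of_nat_diff)
  also have "\<dots> \<le> (\<Sum>x\<in>P - heavy. outweight x)"
  proof (rule sum_mono)
    fix x assume "x \<in> P - heavy"
    then show "1 / 2 \<le> outweight x"
      by (intro half_le_outweight) (auto simp: heavy_def)
  qed
  also have "\<dots> \<le> (\<Sum>x\<in>P. outweight x)"
    by (rule sum_mono2[OF finite_ground]) (auto intro: outweight_nonneg)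
  finally show ?thesis .
qed

lemma one_add_card_heavy_layer_2_le: "1 \<le> excess \<Longrightarrow> 1 + card heavy + card (layer 2) \<le> card M"
proof -
  assume "1 \<le> excess"
  then have "M \<noteq> {}" using c_ge_1 by (auto simp: excess_def)
  have "card heavy \<le> card {x\<in>P. 1 \<le> avoid_count x}"
    using \<open>1 \<le> excess\<close> finite_ground by (intro card_mono) (auto simp: heavy_def)
  then show ?thesis
    using card_avoided_le_layer_1 sum_card_layers_le[of "{0, 1, 2}"] layer_0[OF \<open>M \<noteq> {}\<close>] by simp
qed

lemma heavy_layer_2_bound: "2 \<le> excess \<Longrightarrow> min (excess - 1) 2 * card heavy \<le> 2 * card (layer 2)"
proof -
  assume "2 \<le> excess"
  have "min (excess - 1) 2 \<le> card {S\<in>layer 2. x \<notin> S}" if "x \<in> heavy" for x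
  proof (rule ccontr)
    assume "\<not> ?thesis"
    then have "card {S\<in>layer 2. x \<notin> S} = 0 \<or> card {S\<in>layer 2. x \<notin> S} = 1 \<and> 3 \<le> excess"
      by (auto simp: min_def split: if_split_asm)
    then have "(2::nat) ^ card {S\<in>layer 2. x \<notin> S} < excess"
      using \<open>2 \<le> excess\<close> by auto
    then show False
      using avoid_count_le_pow_layer_2[of x] that by (auto simp: heavy_def)
  qed
  then have "min (excess - 1) 2 * card heavy \<le> (\<Sum>x\<in>heavy. card {S\<in>layer 2. x \<notin> S})"
    using sum_bounded_below[of heavy "min (excess - 1) 2"] by (simp add: ac_simps)
  also have "\<dots> \<le> (\<Sum>x\<in>P. card {S\<in>layer 2. x \<notin> S})"
    by (rule sum_mono2[OF finite_ground]) (auto simp: heavy_def)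
  finally show ?thesis
    using sum_card_avoiding_layer[of 2] by simp
qed

lemma excess_one_bound: "excess = 1 \<Longrightarrow> 1 - (if c = d then 1 / 2 else 0) \<le> (\<Sum>x\<in>P. outweight x)"
  using one_add_card_heavy_layer_2_le half_card_light_le_sum_outweight c_le_d
  by (auto simp: excess_def)

lemma moderate_excess_bound:
  assumes "2 \<le> excess" "5 * excess \<le> d + 2"
  shows "real excess \<le> (\<Sum>x\<in>P. outweight x)"
proof -
  have "card M \<le> excess + d - 1"
    using assms c_le_d by (simp add: excess_def)
  then have "2 * excess + card heavy \<le> d"
    using assms one_add_card_heavy_layer_2_le heavy_layer_2_bound d_ge_50
    by (cases "excess = 2") auto
  then have "real excess \<le> (real d - real (card heavy)) / 2"
    by simp
  then show ?thesis
    using half_card_light_le_sum_outweight by linarith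
qed

lemma large_excess_bound:
  assumes "d + 3 \<le> 5 * excess"
  shows "real excess \<le> (\<Sum>x\<in>P. outweight x)"
proof -
  obtain k where k: "2 * d \<le> 2 ^ k" "7 * k \<le> d + 4"
    using small_exponent_with_pow_ge_double[OF d_ge_50] .
  have card_M: "card M < 2 ^ k"
    using card_upset_le c_ge_1 c_le_d k(1) by linarith
  have "1 \<le> k"
    using k(1) d_ge_50 by (cases k) auto
  have "card (P - S) \<le> k - 1" if "S \<in> M" for S
  proof -
    have "(2::nat) ^ card (P - S) < 2 ^ k"
      using two_pow_card_complement_le[OF that] card_M by linarith
    then show ?thesis
      by simp
  qed
  then have sum_avoid: "(\<Sum>x\<in>P. avoid_count x) \<le> card M * (k - 1)"
    using sum_bounded_above[of M "\<lambda>S. card (P - S)" "k - 1"] by (simp add: sum_avoid_count)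
  have per_point: "(real excess - real (avoid_count x)) / real (k + 2) \<le> outweight x"
    if "x \<in> P" for x
  proof -
    have "excess \<le> min (outdeg x) (2 ^ k) + avoid_count x"
      using excess_le_outdeg_add_avoid_count[OF that] card_M by (auto simp: excess_def min_def)
    then have "real excess - real (avoid_count x) \<le> real (min (outdeg x) (2 ^ k))"
      by linarith
    then have "(real excess - real (avoid_count x)) / real (k + 2)
        \<le> real (min (outdeg x) (2 ^ k)) / real (k + 2)"
      by (rule divide_right_mono) simp
    then show ?thesis
      using outweight_ge[OF that, of k] by linarith
  qed
  have "real excess * real (k + 2) \<le> real d * real excess - real (\<Sum>x\<in>P. avoid_count x)"
  proof -
    have "card M + 1 \<le> excess + d"
      using c_le_d by (simp add: excess_def)
    then have "real excess * (real k + 2) + real (card M) * (real k - 1) \<le> real d * real excess"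
      using k(2) assms \<open>1 \<le> k\<close> by (intro large_excess_arith) simp_all
    moreover have "real (\<Sum>x\<in>P. avoid_count x) \<le> real (card M) * (real k - 1)"
      using sum_avoid \<open>1 \<le> k\<close> by (metis of_nat_diff of_nat_le_iff of_nat_mult of_nat_1)
    ultimately show ?thesis
      by (simp only: of_nat_add of_nat_numeral)
  qed
  then have "real excess \<le> (real d * real excess - real (\<Sum>x\<in>P. avoid_count x)) / real (k + 2)"
    by (simp add: field_simps)
  also have "\<dots> = (\<Sum>x\<in>P. (real excess - real (avoid_count x)) / real (k + 2))"
    by (simp add: sum_divide_distrib[symmetric] sum_subtractf card_ground)
  also have "\<dots> \<le> (\<Sum>x\<in>P. outweight x)"
    using per_point by (rule sum_mono)
  finally show ?thesis .
qed

lemma sum_outweight_ge: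
  "real (card M) + 1 - real c - (if c = d then 1 / 2 else 0) \<le> (\<Sum>x\<in>P. outweight x)"
proof -
  have nonneg: "0 \<le> (\<Sum>x\<in>P. outweight x)"
    by (intro sum_nonneg outweight_nonneg)
  consider "excess = 0" | "excess = 1" | "2 \<le> excess" "5 * excess \<le> d + 2" | "d + 3 \<le> 5 * excess"
    by linarith
  then show ?thesis
  proof cases
    case 1
    then show ?thesis using nonneg by (simp add: excess_def)
  next
    case 2
    then show ?thesis using excess_one_bound by (simp add: excess_def)
  next
    case 3
    then show ?thesis using moderate_excess_bound by (simp add: excess_def)
  next
    case 4
    then show ?thesis using large_excess_bound d_ge_50 by (simp add: excess_def)
  qed
qed

end

section \<open>Weights in hereditary families\<close>

definition outer_degree :: "'a set set \<Rightarrow> 'a set \<Rightarrow> 'a \<Rightarrow> nat" where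
  "outer_degree \<F> P x = card {F\<in>\<F>. x \<in> F \<and> \<not> F \<subseteq> P}"

definition outer_weight :: "'a set set \<Rightarrow> 'a set \<Rightarrow> 'a \<Rightarrow> real" where
  "outer_weight \<F> P x = (\<Sum>F\<in>{F\<in>\<F>. x \<in> F \<and> \<not> F \<subseteq> P}. 1 / real (card F))"

lemma hereditary_small_outer_sets:
  assumes "hereditary \<F>" "F \<in> \<F>" "finite F" "x \<in> F" "x \<in> P" "\<not> F \<subseteq> P" "k + 2 \<le> card F"
  obtains \<G> where "\<G> \<subseteq> {H\<in>\<F>. x \<in> H \<and> \<not> H \<subseteq> P}" "card \<G> = 2 ^ k"
    "\<And>H. H \<in> \<G> \<Longrightarrow> H \<noteq> {} \<and> finite H \<and> card H \<le> k + 2"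
proof -
  obtain w where w: "w \<in> F" "w \<notin> P"
    using assms(6) by blast
  have "x \<noteq> w"
    using assms(5) w(2) by blast
  then have "k \<le> card (F - {x, w})"
    using assms(3,4,7) w(1) by (simp add: card_Diff_subset)
  then obtain T where T: "T \<subseteq> F - {x, w}" "card T = k"
    by (meson obtain_subset_with_card_n)
  have "finite T"
    using T(1) assms(3) finite_subset by blast
  let ?extend = "\<lambda>R. insert x (insert w R)"
  show thesis
  proof
    show "?extend ` Pow T \<subseteq> {H\<in>\<F>. x \<in> H \<and> \<not> H \<subseteq> P}"
    proof
      fix H assume "H \<in> ?extend ` Pow T"
      then obtain R where "R \<subseteq> T" "H = ?extend R"
        by blast
      moreover have "?extend R \<subseteq> F"
        using \<open>R \<subseteq> T\<close> T(1) assms(4) w(1) by blast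
      ultimately show "H \<in> {H\<in>\<F>. x \<in> H \<and> \<not> H \<subseteq> P}"
        using assms(1,2) w(2) unfolding hereditary_def by blast
    qed
    have "inj_on ?extend (Pow T)"
      by (rule inj_onI) (use T(1) in blast)
    then show "card (?extend ` Pow T) = 2 ^ k"
      using \<open>finite T\<close> T(2) by (simp add: card_image card_Pow)
    fix H assume "H \<in> ?extend ` Pow T"
    then obtain R where "R \<subseteq> T" "H = ?extend R"
      by blast
    moreover have "card R \<le> k"
      using \<open>R \<subseteq> T\<close> \<open>finite T\<close> T(2) card_mono by blast
    ultimately show "H \<noteq> {} \<and> finite H \<and> card H \<le> k + 2"
      using \<open>finite T\<close> finite_subset[of R T] by (simp add: card_insert_if)
  qed
qed

lemma outer_weight_ge:
  assumes "finite \<F>" "\<forall>F\<in>\<F>. finite F" "hereditary \<F>" "x \<in> P"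
  shows "real (min (outer_degree \<F> P x) (2 ^ k)) / real (k + 2) \<le> outer_weight \<F> P x"
proof -
  let ?\<O> = "{F\<in>\<F>. x \<in> F \<and> \<not> F \<subseteq> P}"
  obtain \<G> where \<G>: "\<G> \<subseteq> ?\<O>" "min (card ?\<O>) (2 ^ k) \<le> card \<G>"
    "\<And>H. H \<in> \<G> \<Longrightarrow> H \<noteq> {} \<and> finite H \<and> card H \<le> k + 2"
  proof (cases "\<forall>H\<in>?\<O>. card H \<le> k + 2")
    case True
    then show thesis
      using assms(2) by (intro that[of ?\<O>]) auto
  next
    case False
    then obtain F where "F \<in> ?\<O>" "k + 2 < card F"
      by (meson not_le)
    then have F: "F \<in> \<F>" "x \<in> F" "\<not> F \<subseteq> P" "k + 2 \<le> card F"
      by simp_all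
    obtain \<G> where "\<G> \<subseteq> ?\<O>" "card \<G> = 2 ^ k" "\<And>H. H \<in> \<G> \<Longrightarrow> H \<noteq> {} \<and> finite H \<and> card H \<le> k + 2"
      using hereditary_small_outer_sets[OF assms(3) F(1) _ F(2) assms(4) F(3,4)] assms(2) F(1) by blast
    then show thesis
      by (intro that[of \<G>]) auto
  qed
  have "real (min (card ?\<O>) (2 ^ k)) / real (k + 2) \<le> real (card \<G>) / real (k + 2)"
    using \<G>(2) by (simp add: divide_right_mono)
  also have "\<dots> \<le> outer_weight \<F> P x"
    unfolding outer_weight_def using assms(1) \<G>(1,3) by (intro card_div_le_sum_inverse_card) auto
  finally show ?thesis
    by (simp add: outer_degree_def)
qed

lemma card_inner_add_missing_containing:
  assumes "finite P" "x \<in> P"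
  shows "card {F\<in>\<F>. x \<in> F \<and> F \<subseteq> P} + card {S\<in>Pow P - \<F>. x \<in> S} = 2 ^ (card P - 1)"
proof -
  let ?X = "{S. S \<subseteq> P \<and> x \<in> S}"
  have "{F\<in>\<F>. x \<in> F \<and> F \<subseteq> P} = ?X \<inter> \<F>" "{S\<in>Pow P - \<F>. x \<in> S} = ?X - \<F>"
    by auto
  moreover have "finite ?X"
    using assms(1) by simp
  ultimately show ?thesis
    using card_Int_Diff[of ?X \<F>] card_subsets_containing[OF assms] by simp
qed

lemma deg_eq_inner_add_outer_degree:
  "finite \<F> \<Longrightarrow> deg \<F> x = card {F\<in>\<F>. x \<in> F \<and> F \<subseteq> P} + outer_degree \<F> P x"
  unfolding deg_def outer_degree_def
  by (subst card_Un_disjoint[symmetric]) (auto intro: arg_cong[where f = card])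

lemma weight_eq_inner_add_outer_weight:
  "finite \<F> \<Longrightarrow>
    weight \<F> x = (\<Sum>F\<in>{F\<in>\<F>. x \<in> F \<and> F \<subseteq> P}. 1 / real (card F)) + outer_weight \<F> P x"
  unfolding weight_def outer_weight_def
  by (subst sum.union_disjoint[symmetric]) (auto intro: sum.cong)

lemma sum_inner_weight:
  assumes "finite P" "finite \<F>" "{} \<in> \<F>"
  shows "(\<Sum>x\<in>P. \<Sum>F\<in>{F\<in>\<F>. x \<in> F \<and> F \<subseteq> P}. 1 / real (card F)) = real (card (\<F> \<inter> Pow P)) - 1"
proof -
  let ?I = "\<F> \<inter> Pow P"
  have "finite ?I"
    using assms(2) by simp
  have "(\<Sum>x\<in>P. \<Sum>F\<in>{F\<in>\<F>. x \<in> F \<and> F \<subseteq> P}. 1 / real (card F))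
      = (\<Sum>x\<in>P. \<Sum>F\<in>{F. F \<in> ?I \<and> x \<in> F}. 1 / real (card F))"
    by (intro sum.cong) (auto intro: sum.cong)
  also have "\<dots> = (\<Sum>F\<in>?I. \<Sum>x\<in>{x. x \<in> P \<and> x \<in> F}. 1 / real (card F))"
    by (rule sum.swap_restrict[OF assms(1) \<open>finite ?I\<close>])
  also have "\<dots> = (\<Sum>F\<in>?I. if F = {} then 0 else 1)"
  proof (rule sum.cong[OF refl])
    fix F assume "F \<in> ?I"
    then have "{x. x \<in> P \<and> x \<in> F} = F" "finite F"
      using assms(1) finite_subset by auto
    then show "(\<Sum>x\<in>{x. x \<in> P \<and> x \<in> F}. 1 / real (card F)) = (if F = {} then 0 else 1)"
      by simp
  qed
  also have "\<dots> = (\<Sum>F\<in>?I - {{}}. 1)"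
    using \<open>finite ?I\<close> by (intro sum.mono_neutral_cong_right) auto
  also have "\<dots> = real (card ?I) - 1"
  proof -
    have "0 < card ?I"
      using assms(3) \<open>finite ?I\<close> by (auto simp: card_gt_0_iff)
    then show ?thesis
      using assms(3) \<open>finite ?I\<close> by (simp add: card_Diff_singleton of_nat_diff)
  qed
  finally show ?thesis .
qed

lemma sum_weight_eq:
  assumes "finite P" "finite \<F>" "{} \<in> \<F>"
  shows "(\<Sum>x\<in>P. weight \<F> x) = real (card (\<F> \<inter> Pow P)) - 1 + (\<Sum>x\<in>P. outer_weight \<F> P x)"
proof -
  have "(\<Sum>x\<in>P. weight \<F> x) = (\<Sum>x\<in>P. (\<Sum>F\<in>{F\<in>\<F>. x \<in> F \<and> F \<subseteq> P}. 1 / real (card F))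
      + outer_weight \<F> P x)"
    by (rule sum.cong[OF refl]) (rule weight_eq_inner_add_outer_weight[OF assms(2)])
  then show ?thesis
    using sum_inner_weight[OF assms] by (simp add: sum.distrib)
qed

lemma hereditary_missing_upset: "hereditary \<F> \<Longrightarrow> finite P \<Longrightarrow> upset P (Pow P - \<F>)"
  by unfold_locales (auto simp: hereditary_def)

lemma min_deg_le_deg: "x \<in> {1..n} \<Longrightarrow> min_deg n \<F> \<le> deg \<F> x"
  unfolding min_deg_def by simp

lemma frakB_mult:
  assumes "1 \<le> c" "c \<le> d" "2 \<le> d"
  shows "frakB d c * real d = 2 ^ d - real c - (if c = d then 1 / 2 else 0)"
  using assms by (auto simp: frakB_def)

lemma pile_missing_upset:
  assumes "d \<ge> 50" "1 \<le> c" "c \<le> d"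
    and "\<F> \<subseteq> Pow {1..n}" "hereditary \<F>"
    and min_deg: "int (min_deg n \<F>) \<ge> 2 ^ (d - 1) - int c + 1"
    and "P \<subseteq> {1..n}" "card P = d" "z \<in> P" "nbhd \<F> z = P"
  shows "missing_upset P (Pow P - \<F>) d c z (outer_degree \<F> P) (outer_weight \<F> P)"
proof -
  have "finite P" "\<forall>F\<in>\<F>. finite F"
    using assms(4,7) by (auto intro: finite_subset)
  have "finite \<F>"
    using assms(4) by (rule finite_subset) simp
  interpret upset P "Pow P - \<F>"
    using hereditary_missing_upset[OF assms(5) \<open>finite P\<close>] .
  show ?thesis
  proof unfold_locales
    show "outer_degree \<F> P z = 0"
      using assms(10) \<open>finite \<F>\<close> unfolding outer_degree_def nbhd_def by auto
    fix x assume "x \<in> P"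
    have "min_deg n \<F> \<le> deg \<F> x"
      using min_deg_le_deg \<open>x \<in> P\<close> assms(7) by blast
    then have "int (2 ^ (d - 1) + 1) \<le> int (deg \<F> x + c)"
      using min_deg by simp
    then have "2 ^ (d - 1) + 1 \<le> deg \<F> x + c"
      by (simp only: of_nat_le_iff)
    then show "card {S\<in>Pow P - \<F>. x \<in> S} \<le> outer_degree \<F> P x + (c - 1)"
      using card_inner_add_missing_containing[OF \<open>finite P\<close> \<open>x \<in> P\<close>, of \<F>, unfolded assms(8)]
        deg_eq_inner_add_outer_degree[OF \<open>finite \<F>\<close>, of x P] assms(2) by linarith
    show "real (min (outer_degree \<F> P x) (2 ^ k)) / real (k + 2) \<le> outer_weight \<F> P x" for k
      using outer_weight_ge \<open>finite \<F>\<close> \<open>\<forall>F\<in>\<F>. finite F\<close> assms(5) \<open>x \<in> P\<close> by blast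
  qed (use assms in auto)
qed

theorem mainTheorem14:
  fixes n d c :: nat and \<F> :: "nat set set" and P :: "nat set"
  assumes "d \<ge> 50" and "1 \<le> c" and "c \<le> d"
    and "\<F> \<subseteq> Pow {1..n}" and "hereditary \<F>"
    and "int (min_deg n \<F>) \<ge> 2 ^ (d - 1) - int c + 1"
    and "isolated_pile n d \<F> P"
  shows "(\<Sum>x\<in>P. weight \<F> x) \<ge> frakB d c * real d"
proof -
  obtain z where P: "P \<subseteq> {1..n}" "card P = d" "z \<in> P" "nbhd \<F> z = P"
    using assms(7) unfolding isolated_pile_def is_pile_def by blast
  interpret missing_upset P "Pow P - \<F>" d c z "outer_degree \<F> P" "outer_weight \<F> P"
    by (rule pile_missing_upset[OF assms(1-6) P])
  have "finite \<F>"
    using assms(4) by (rule finite_subset) simp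
  have "card (\<F> \<inter> Pow P) + card (Pow P - \<F>) = 2 ^ d"
    using card_Int_Diff[of "Pow P" \<F>] finite_ground P(2) by (simp add: card_Pow Int_commute)
  then have "\<F> \<inter> Pow P \<noteq> {}"
    and card_split: "real (card (\<F> \<inter> Pow P)) + real (card (Pow P - \<F>)) = 2 ^ d"
    using card_upset_less_two_pow by (auto simp flip: of_nat_add)
  then have "{} \<in> \<F>"
    using assms(5) unfolding hereditary_def by blast
  moreover have "frakB d c * real d = 2 ^ d - real c - (if c = d then 1 / 2 else 0)"
    using assms(1-3) by (intro frakB_mult) simp_all
  ultimately show ?thesis
    using sum_weight_eq[OF finite_ground \<open>finite \<F>\<close>] sum_outweight_ge card_split by linarith
qed

end
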